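(* Let $d\ge2$, let $\Omega=\{x\in\mathbb R^d:\ \ell_j(x)>b_j,\ j=1,\dots,m\}$ be a nonempty bounded open convex polytope, and let $E\subset\mathbb R^d$ carry a Borel probability measure $\mu$ such that $(E,\mu)$ is weakly incoming to $\Omega$. Let $x_0\in\overline\Omega$ and $k=\mathrm c(x_0)$. Then there exist $\epsilon>0$ and measurable subsets $F_1,\dots,F_k\subset E$ with $\mu(F_i)>0$ for all $i$, such that: (a) there exist $r_0>0$ and $I\subset\{1,\dots,m\}$ with $\#I=k$ such that $\Omega\cap B(x_0,r_0)=\big(\bigcap_{i\in I}H_i^+\big)\cap B(x_0,r_0)$; (b) there exist $\theta_1,\dots,\theta_k\in\{\pm1\}$ and a bijection $\{1,\dots,k\}\ni n\mapsto i_n\in I$ such that for every $n\in\{1,\dots,k\}$ and every $f_n\in F_n$, $\theta_nf_n$ is strictly incoming to $H_{i_n}$ and $\theta_nf_n$ is incoming to $H_{i_m}$ for all $m>n$. Moreover, the sets $F_1,\dots,F_k$ can be chosen with arbitrarily small diameter.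
   Context: $\ell_j$ are linear forms and $b_j$ reals; $B(x_0,r)$ is the open ball. Define $\mathrm c(x)=0$ for $x\in\Omega$, $+\infty$ for $x\notin\overline\Omega$, $\#\{i:\ell_i(x)=b_i\}$ for $x\in\partial\Omega$. $(E,\mu)$ is weakly incoming to $\Omega$ if for every $x_0\in\partial\Omega$ there exist $\epsilon>0$, $\theta\in\{\pm1\}$ and a measurable $F\subset E$ with $\mu(F)>0$ such that $\mathrm c(x_0+\theta te)<\mathrm c(x_0)$ for all $t\in]0,\epsilon]$, $e\in F$. $H_k=\ker\ell_k$, $H_k^+=\{y:\ell_k(y)>b_k\}$, $\nu_k$ is the unit vector orthogonal to $H_k$ with $\ell_k(\nu_k)>0$. A nonzero vector $u$ is incoming to $H_k$ if $\langle u,\nu_k\rangle\ge0$ and strictly incoming if $\langle u,\nu_k\rangle>0$. *)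

theory Defs
  imports "HOL-Probability.Probability" "HOL-Library.Extended_Nat"
begin

definition polytope :: "(nat \<Rightarrow> 'a::euclidean_space \<Rightarrow> real) \<Rightarrow> (nat \<Rightarrow> real) \<Rightarrow> nat \<Rightarrow> 'a set" where
  "polytope l b m = {x. \<forall>j\<in>{1..m}. l j x > b j}"

definition cnt :: "(nat \<Rightarrow> 'a::euclidean_space \<Rightarrow> real) \<Rightarrow> (nat \<Rightarrow> real) \<Rightarrow> nat \<Rightarrow> 'a \<Rightarrow> enat" where
  "cnt l b m x =
     (if x \<in> polytope l b m then 0
      else if x \<notin> closure (polytope l b m) then \<infinity>
      else enat (card {i\<in>{1..m}. l i x = b i}))"

definition weakly_incoming ::
  "'a::euclidean_space measure \<Rightarrow> (nat \<Rightarrow> 'a \<Rightarrow> real) \<Rightarrow> (nat \<Rightarrow> real) \<Rightarrow> nat \<Rightarrow> bool" where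
  "weakly_incoming \<mu> l b m \<longleftrightarrow>
     (\<forall>x0\<in>frontier (polytope l b m). \<exists>\<epsilon>>0. \<exists>\<theta>\<in>{-1::real, 1}. \<exists>F\<in>sets \<mu>.
        emeasure \<mu> F > 0 \<and>
        (\<forall>t\<in>{0<..\<epsilon>}. \<forall>e\<in>F. cnt l b m (x0 + (\<theta> * t) *\<^sub>R e) < cnt l b m x0))"

definition Hplus :: "('a \<Rightarrow> real) \<Rightarrow> real \<Rightarrow> 'a set" where
  "Hplus lk bk = {y. lk y > bk}"

definition nu :: "('a::euclidean_space \<Rightarrow> real) \<Rightarrow> 'a" where
  "nu lk = (SOME v. norm v = 1 \<and> (\<forall>y. lk y = 0 \<longrightarrow> v \<bullet> y = 0) \<and> lk v > 0)"

definition incoming :: "'a::euclidean_space \<Rightarrow> ('a \<Rightarrow> real) \<Rightarrow> bool" where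
  "incoming u lk \<longleftrightarrow> u \<noteq> 0 \<and> u \<bullet> nu lk \<ge> 0"

definition strictly_incoming :: "'a::euclidean_space \<Rightarrow> ('a \<Rightarrow> real) \<Rightarrow> bool" where
  "strictly_incoming u lk \<longleftrightarrow> u \<noteq> 0 \<and> u \<bullet> nu lk > 0"

end

theory Submission
  imports Defs
begin

(* Induction on the number k of constraints active at x0.  If k > 0, then x0 is a boundary
   point, and weak incomingness gives a sign theta and a set F of positive measure such that
   for e in F the vector theta e points weakly into every active half-space and strictly into
   at least one.  Splitting F according to the set P of active constraints entered strictly,
   and by a countable cover with small balls, yields a piece G of positive measure and small
   diameter on which P is constant.  A short step from x0 along theta e0, e0 in G, reaches a
   point of the closure whose active constraints are exactly those outside P; the induction
   hypothesis there provides the remaining sets, and listing the constraints of P first,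
   each paired with G, completes the ordering. *)

definition active_constraints :: "(nat \<Rightarrow> 'a \<Rightarrow> real) \<Rightarrow> (nat \<Rightarrow> real) \<Rightarrow> nat \<Rightarrow> 'a \<Rightarrow> nat set" where
  "active_constraints l b m x = {i\<in>{1..m}. l i x = b i}"

lemma finite_active_constraints [simp]: "finite (active_constraints l b m x)"
  by (simp add: active_constraints_def)

lemma continuous_on_linear_functional:
  "linear (f :: 'a::euclidean_space \<Rightarrow> real) \<Longrightarrow> continuous_on S f"
  by (simp add: linear_continuous_on linear_conv_bounded_linear)

lemma open_polytope:
  assumes "\<forall>j\<in>{1..m}. linear (l j)"
  shows "open (polytope l b m)"
proof -
  have "polytope l b m = (\<Inter>j\<in>{1..m}. {x. b j < l j x})"
    by (auto simp: polytope_def)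
  moreover have "open {x. b j < l j x}" if "j \<in> {1..m}" for j
    using assms that by (intro open_Collect_less continuous_on_const continuous_on_linear_functional) auto
  ultimately show ?thesis
    by auto
qed

lemma closure_polytope:
  assumes lin: "\<forall>j\<in>{1..m}. linear (l j)" and ne: "polytope l b m \<noteq> {}"
  shows "closure (polytope l b m) = {x. \<forall>j\<in>{1..m}. b j \<le> l j x}"
proof
  have "{x. \<forall>j\<in>{1..m}. b j \<le> l j x} = (\<Inter>j\<in>{1..m}. {x. b j \<le> l j x})"
    by auto
  moreover have "closed {x. b j \<le> l j x}" if "j \<in> {1..m}" for j
    using lin that by (intro closed_Collect_le continuous_on_const continuous_on_linear_functional) auto
  ultimately have "closed {x. \<forall>j\<in>{1..m}. b j \<le> l j x}"
    by auto
  then show "closure (polytope l b m) \<subseteq> {x. \<forall>j\<in>{1..m}. b j \<le> l j x}"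
    by (rule closure_minimal[rotated]) (auto simp: polytope_def less_imp_le)
next
  obtain p where p: "p \<in> polytope l b m"
    using ne by auto
  show "{x. \<forall>j\<in>{1..m}. b j \<le> l j x} \<subseteq> closure (polytope l b m)"
  proof
    fix y assume y: "y \<in> {x. \<forall>j\<in>{1..m}. b j \<le> l j x}"
    have "open_segment p y \<subseteq> polytope l b m"
    proof
      fix z assume "z \<in> open_segment p y"
      then obtain u where u: "0 < u" "u < 1" and z: "z = (1 - u) *\<^sub>R p + u *\<^sub>R y"
        by (auto simp: in_segment)
      have "b j < l j z" if j: "j \<in> {1..m}" for j
      proof -
        have "l j z = (1 - u) * l j p + u * l j y"
          using lin j by (simp add: z linear_add linear_cmul)
        moreover have "(1 - u) * b j < (1 - u) * l j p" "u * b j \<le> u * l j y"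
          using p y j u by (auto simp: polytope_def intro!: mult_strict_left_mono mult_left_mono)
        ultimately show ?thesis
          by (simp add: algebra_simps)
      qed
      then show "z \<in> polytope l b m"
        by (simp add: polytope_def)
    qed
    then have "closure (open_segment p y) \<subseteq> closure (polytope l b m)"
      by (rule closure_mono)
    then show "y \<in> closure (polytope l b m)"
      using p closure_subset by (cases "p = y") auto
  qed
qed

lemma polytope_less: "x \<in> polytope l b m \<Longrightarrow> j \<in> {1..m} \<Longrightarrow> b j < l j x"
  by (simp add: polytope_def)

lemma active_constraints_polytope:
  "x \<in> polytope l b m \<Longrightarrow> active_constraints l b m x = {}"
  by (auto simp: active_constraints_def dest: polytope_less)

lemma closure_polytope_le:
  assumes "\<forall>j\<in>{1..m}. linear (l j)" and "polytope l b m \<noteq> {}"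
    and "x \<in> closure (polytope l b m)" and "j \<in> {1..m}"
  shows "b j \<le> l j x"
  using assms by (simp add: closure_polytope)

lemma cnt_eq_card_active_constraints:
  "x \<in> closure (polytope l b m) \<Longrightarrow> cnt l b m x = enat (card (active_constraints l b m x))"
  using active_constraints_polytope[of x l b m]
  unfolding cnt_def active_constraints_def[symmetric] by (simp add: zero_enat_def)

lemma nu_inner_proportional:
  fixes l :: "'a::euclidean_space \<Rightarrow> real"
  assumes lin: "linear l" and nz: "l y0 \<noteq> 0"
  shows "\<exists>\<alpha>>0. \<forall>u. nu l \<bullet> u = \<alpha> * l u"
proof -
  define w where "w = adjoint l 1"
  have lw: "l u = w \<bullet> u" for u
    using adjoint_works[OF lin, of u 1] by (simp add: w_def inner_commute)
  have ww: "w \<bullet> w > 0"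
    using nz lw[of y0] by auto
  have "norm (w /\<^sub>R norm w) = 1 \<and> (\<forall>y. l y = 0 \<longrightarrow> (w /\<^sub>R norm w) \<bullet> y = 0) \<and> l (w /\<^sub>R norm w) > 0"
    using ww by (auto simp: lw inner_commute)
  then have nu: "norm (nu l) = 1 \<and> (\<forall>y. l y = 0 \<longrightarrow> nu l \<bullet> y = 0) \<and> l (nu l) > 0"
    unfolding nu_def by (rule someI)
  \<comment> \<open>the component \<open>r\<close> of \<open>nu l\<close> orthogonal to \<open>w\<close> lies in the kernel of \<open>l\<close>,
    so it is orthogonal to \<open>nu l\<close> as well and therefore vanishes\<close>
  define \<alpha> where "\<alpha> = (nu l \<bullet> w) / (w \<bullet> w)"
  define r where "r = nu l - \<alpha> *\<^sub>R w"
  have rw: "r \<bullet> w = 0"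
    using ww by (simp add: r_def \<alpha>_def inner_diff_left)
  then have "nu l \<bullet> r = 0"
    using nu lw inner_commute by metis
  with rw have "r \<bullet> r = 0"
    by (simp add: r_def inner_diff_left inner_diff_right inner_commute)
  then have "r = 0"
    by simp
  then have "nu l = \<alpha> *\<^sub>R w"
    by (simp add: r_def)
  moreover have "l (nu l) > 0"
    using nu by blast
  ultimately have "\<alpha> > 0"
    using ww by (simp add: lw zero_less_mult_iff)
  with \<open>nu l = \<alpha> *\<^sub>R w\<close> show ?thesis
    by (auto simp: lw)
qed

lemma incoming_iff_linear:
  fixes l :: "'a::euclidean_space \<Rightarrow> real"
  assumes "linear l" and "l y0 \<noteq> 0"
  shows "incoming u l \<longleftrightarrow> u \<noteq> 0 \<and> 0 \<le> l u"
  using nu_inner_proportional[OF assms]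
  by (auto simp: incoming_def inner_commute zero_le_mult_iff)

lemma strictly_incoming_iff_linear:
  fixes l :: "'a::euclidean_space \<Rightarrow> real"
  assumes "linear l" and "l y0 \<noteq> 0"
  shows "strictly_incoming u l \<longleftrightarrow> 0 < l u"
  using nu_inner_proportional[OF assms] linear_0[OF assms(1)]
  by (auto simp: strictly_incoming_def inner_commute zero_less_mult_iff)

lemma strictly_incoming_imp_incoming: "strictly_incoming u l \<Longrightarrow> incoming u l"
  by (simp add: strictly_incoming_def incoming_def)

lemma frontier_polytope_if_active:
  assumes "\<forall>j\<in>{1..m}. linear (l j)" and "x \<in> closure (polytope l b m)"
    and "active_constraints l b m x \<noteq> {}"
  shows "x \<in> frontier (polytope l b m)"
  using assms active_constraints_polytope[of x l b m]
  by (auto simp: frontier_def interior_open[OF open_polytope])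

lemma active_signs_if_cnt_decreases:
  assumes lin: "\<forall>j\<in>{1..m}. linear (l j)" and ne: "polytope l b m \<noteq> {}"
    and x: "x \<in> closure (polytope l b m)" and dec: "cnt l b m (x + v) < cnt l b m x"
  shows "(\<forall>i\<in>active_constraints l b m x. 0 \<le> l i v) \<and> (\<exists>i\<in>active_constraints l b m x. 0 < l i v)"
proof -
  let ?A = "active_constraints l b m x"
  have cnt_x: "cnt l b m x = enat (card ?A)"
    using x by (rule cnt_eq_card_active_constraints)
  then have y: "x + v \<in> closure (polytope l b m)"
    using dec closure_subset by (auto simp: cnt_def split: if_splits)
  have l_y: "l i (x + v) = b i + l i v" if "i \<in> ?A" for i
    using that lin by (auto simp: active_constraints_def linear_add)
  have nonneg: "0 \<le> l i v" if "i \<in> ?A" for i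
    using that l_y[OF that] closure_polytope_le[OF lin ne y, of i]
    by (simp add: active_constraints_def)
  moreover have "\<exists>i\<in>?A. 0 < l i v"
  proof (rule ccontr)
    assume "\<not> ?thesis"
    with nonneg have "?A \<subseteq> active_constraints l b m (x + v)"
      using l_y by (force simp: active_constraints_def)
    then have "card ?A \<le> card (active_constraints l b m (x + v))"
      by (simp add: card_mono)
    then show False
      using dec cnt_x cnt_eq_card_active_constraints[OF y] by simp
  qed
  ultimately show ?thesis
    by blast
qed

lemma active_constraints_after_small_step:
  assumes lin: "\<forall>j\<in>{1..m}. linear (l j)" and ne: "polytope l b m \<noteq> {}"
    and x: "x \<in> closure (polytope l b m)" and v: "\<forall>i\<in>active_constraints l b m x. 0 \<le> l i v"
  shows "\<exists>t>0. x + t *\<^sub>R v \<in> closure (polytope l b m) \<and>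
    active_constraints l b m (x + t *\<^sub>R v) = {i\<in>active_constraints l b m x. l i v = 0}"
proof -
  let ?A = "active_constraints l b m x"
  let ?J = "{1..m} - ?A"
  have slack: "b j < l j x" if "j \<in> ?J" for j
    using that x by (force simp: closure_polytope[OF lin ne] active_constraints_def)
  \<comment> \<open>a short enough step keeps every inactive constraint inactive\<close>
  have "\<forall>\<^sub>F t in at_right 0. \<forall>j\<in>?J. b j - l j x < t * l j v"
  proof (rule eventually_ball_finite)
    show "\<forall>j\<in>?J. \<forall>\<^sub>F t in at_right 0. b j - l j x < t * l j v"
    proof
      fix j assume "j \<in> ?J"
      have "((\<lambda>t. t * l j v) \<longlongrightarrow> 0 * l j v) (at_right 0)"
        by (intro tendsto_intros)
      then show "\<forall>\<^sub>F t in at_right 0. b j - l j x < t * l j v"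
        using slack[OF \<open>j \<in> ?J\<close>] by (auto intro: order_tendstoD(1))
    qed
  qed simp
  then obtain e where "e > 0" and e: "\<And>t. 0 < t \<Longrightarrow> t < e \<Longrightarrow> \<forall>j\<in>?J. b j - l j x < t * l j v"
    by (auto simp: eventually_at_right_field)
  define t where "t = e / 2"
  have t: "0 < t" "\<forall>j\<in>?J. b j - l j x < t * l j v"
    using \<open>e > 0\<close> e[of t] by (auto simp: t_def)
  have l_step: "l j (x + t *\<^sub>R v) = l j x + t * l j v" if "j \<in> {1..m}" for j
    using that lin by (simp add: linear_add linear_cmul)
  have "x + t *\<^sub>R v \<in> closure (polytope l b m)"
    unfolding closure_polytope[OF lin ne]
  proof safe
    fix j assume j: "j \<in> {1..m}"
    show "b j \<le> l j (x + t *\<^sub>R v)"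
    proof (cases "j \<in> ?A")
      case True
      then show ?thesis
        using v t l_step[OF j] by (auto simp: active_constraints_def)
    next
      case False
      then show ?thesis
        using t l_step[OF j] j by force
    qed
  qed
  moreover have "active_constraints l b m (x + t *\<^sub>R v) = {i\<in>?A. l i v = 0}"
    using t l_step by (force simp: active_constraints_def)
  ultimately show ?thesis
    using t by blast
qed

lemma Int_borel_in_sets_restrict_space:
  assumes "sets M = sets (restrict_space borel E)" and "F \<in> sets M" and "S \<in> sets borel"
  shows "F \<inter> S \<in> sets M"
proof -
  obtain B where "B \<in> sets borel" and "F = E \<inter> B"
    using assms(1,2) by (auto simp: sets_restrict_space)
  then have "F \<inter> S = E \<inter> (B \<inter> S)"
    by auto
  then show ?thesis
    using assms(1,3) \<open>B \<in> sets borel\<close> by (auto simp: sets_restrict_space)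
qed

lemma emeasure_pos_countable_cover:
  assumes "countable I" and "\<And>i. i \<in> I \<Longrightarrow> S i \<in> sets M"
    and "F \<in> sets M" and "0 < emeasure M F" and "F \<subseteq> (\<Union>i\<in>I. S i)"
  shows "\<exists>i\<in>I. 0 < emeasure M (S i)"
proof (rule ccontr)
  assume "\<not> ?thesis"
  then have "(\<Union>i\<in>I. S i) \<in> null_sets M"
    using assms(1,2) by (intro null_sets_UN') (auto simp: null_sets_def)
  then have "F \<in> null_sets M"
    using assms(3,5) by (rule null_sets_subset)
  then show False
    using assms(4) by auto
qed

lemma countable_ball_cover:
  fixes r :: real
  assumes "0 < r"
  shows "\<exists>\<B>. countable \<B> \<and> \<B> \<subseteq> range (\<lambda>c::'a::euclidean_space. ball c r) \<and> \<Union>\<B> = UNIV"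
proof -
  obtain \<B> where "\<B> \<subseteq> range (\<lambda>c::'a. ball c r)" "countable \<B>"
      "\<Union>\<B> = \<Union>(range (\<lambda>c. ball c r))"
    by (rule Lindelof[of "range (\<lambda>c. ball c r)"]) auto
  moreover have "\<Union>(range (\<lambda>c::'a. ball c r)) = UNIV"
    using assms by force
  ultimately show ?thesis
    by auto
qed

lemma positive_measure_small_piece:
  fixes M :: "'a::euclidean_space measure"
  assumes sets: "sets M = sets (restrict_space borel E)"
    and F: "F \<in> sets M" "0 < emeasure M F" and \<delta>: "0 < \<delta>"
    and Q: "finite Q" "\<And>q. q \<in> Q \<Longrightarrow> C q \<in> sets borel" "F \<subseteq> (\<Union>q\<in>Q. C q)"
  shows "\<exists>q\<in>Q. \<exists>G\<in>sets M. G \<subseteq> F \<inter> C q \<and> 0 < emeasure M G \<and> bounded G \<and> diameter G < \<delta>"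
proof -
  obtain \<B> where \<B>: "countable \<B>" "\<B> \<subseteq> range (\<lambda>c::'a. ball c (\<delta>/3))" "\<Union>\<B> = UNIV"
    using countable_ball_cover[of "\<delta>/3"] \<delta> by auto
  define S where "S qB = F \<inter> (C (fst qB) \<inter> snd qB)" for qB
  have S_sets: "S qB \<in> sets M" if "qB \<in> Q \<times> \<B>" for qB
    unfolding S_def using that Q(2) \<B>(2)
    by (intro Int_borel_in_sets_restrict_space[OF sets F(1)]) auto
  moreover have "F \<subseteq> (\<Union>qB\<in>Q \<times> \<B>. S qB)"
  proof
    fix e assume "e \<in> F"
    then obtain q where "q \<in> Q" "e \<in> C q"
      using Q(3) by blast
    moreover obtain B where "B \<in> \<B>" "e \<in> B"
      using \<B>(3) by blast
    ultimately show "e \<in> (\<Union>qB\<in>Q \<times> \<B>. S qB)"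
      using \<open>e \<in> F\<close> by (auto simp: S_def)
  qed
  moreover have "countable (Q \<times> \<B>)"
    using Q(1) \<B>(1) by (auto intro: countable_SIGMA countable_finite)
  ultimately obtain q B where qB: "q \<in> Q" "B \<in> \<B>" and pos: "0 < emeasure M (S (q, B))"
    using emeasure_pos_countable_cover[of "Q \<times> \<B>" S M F] F by auto
  obtain c where c: "B = ball c (\<delta>/3)"
    using qB(2) \<B>(2) by auto
  have small: "S (q, B) \<subseteq> ball c (\<delta>/3)"
    by (auto simp: S_def c)
  then have "diameter (S (q, B)) \<le> diameter (ball c (\<delta>/3))"
    by (rule diameter_subset) auto
  then have "diameter (S (q, B)) < \<delta>"
    using \<delta> by simp
  moreover have "bounded (S (q, B))"
    using small bounded_subset by blast
  moreover have "S (q, B) \<in> sets M"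
    using qB S_sets by blast
  moreover have "S (q, B) \<subseteq> F \<inter> C q"
    by (auto simp: S_def)
  ultimately show ?thesis
    using qB(1) pos by blast
qed

lemma bij_betw_concat_intervals:
  fixes p q :: nat
  assumes g: "bij_betw g {1..p} P" and h: "bij_betw h {1..q} Z" and disj: "P \<inter> Z = {}"
  shows "bij_betw (\<lambda>n. if n \<le> p then g n else h (n - p)) {1..p + q} (P \<union> Z)"
proof -
  have split: "{1..p + q} = {1..p} \<union> {p + 1..p + q}"
    by auto
  have "bij_betw (\<lambda>n. if n \<le> p then g n else h (n - p)) {1..p} P"
    using g by (rule bij_betw_cong[THEN iffD1, rotated]) auto
  moreover have "bij_betw (\<lambda>n. n - p) {p + 1..p + q} {1..q}"
    by (rule bij_betw_byWitness[where f' = "\<lambda>n. n + p"]) auto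
  then have "bij_betw (h \<circ> (\<lambda>n. n - p)) {p + 1..p + q} Z"
    using h by (rule bij_betw_trans)
  then have "bij_betw (\<lambda>n. if n \<le> p then g n else h (n - p)) {p + 1..p + q} Z"
    by (rule bij_betw_cong[THEN iffD1, rotated]) auto
  ultimately show ?thesis
    unfolding split using disj by (rule bij_betw_combine)
qed

definition incoming_chain ::
  "'a::euclidean_space measure \<Rightarrow> (nat \<Rightarrow> 'a \<Rightarrow> real) \<Rightarrow> real \<Rightarrow> nat set \<Rightarrow> nat \<Rightarrow>
   (nat \<Rightarrow> 'a set) \<Rightarrow> (nat \<Rightarrow> real) \<Rightarrow> (nat \<Rightarrow> nat) \<Rightarrow> bool" where
  "incoming_chain M l \<delta> I k F \<theta> idx \<longleftrightarrow>
     (\<forall>n\<in>{1..k}. F n \<in> sets M \<and> emeasure M (F n) > 0 \<and> bounded (F n) \<and> diameter (F n) < \<delta>) \<and>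
     (\<forall>n\<in>{1..k}. \<theta> n \<in> {-1, 1}) \<and> bij_betw idx {1..k} I \<and>
     (\<forall>n\<in>{1..k}. \<forall>f\<in>F n. strictly_incoming (\<theta> n *\<^sub>R f) (l (idx n)) \<and>
        (\<forall>m'\<in>{n<..k}. incoming (\<theta> n *\<^sub>R f) (l (idx m'))))"

lemma incoming_chain_empty: "incoming_chain M l \<delta> {} 0 F \<theta> idx"
  by (simp add: incoming_chain_def bij_betw_def)

lemma incoming_chain_prepend:
  fixes p q :: nat
  assumes chain: "incoming_chain M l \<delta> Z q F \<theta> idx"
    and g: "bij_betw g {1..p} P" and disj: "P \<inter> Z = {}"
    and G: "G \<in> sets M" "emeasure M G > 0" "bounded G" "diameter G < \<delta>"
    and s: "s \<in> {-1, 1}"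
    and strict: "\<And>f i. f \<in> G \<Longrightarrow> i \<in> P \<Longrightarrow> strictly_incoming (s *\<^sub>R f) (l i)"
    and weak: "\<And>f i. f \<in> G \<Longrightarrow> i \<in> Z \<Longrightarrow> incoming (s *\<^sub>R f) (l i)"
  shows "incoming_chain M l \<delta> (P \<union> Z) (p + q)
    (\<lambda>n. if n \<le> p then G else F (n - p)) (\<lambda>n. if n \<le> p then s else \<theta> (n - p))
    (\<lambda>n. if n \<le> p then g n else idx (n - p))"
    (is "incoming_chain M l \<delta> _ _ ?F ?\<theta> ?idx")
proof -
  have idx: "bij_betw idx {1..q} Z"
    using chain by (simp add: incoming_chain_def)
  have shifted: "n - p \<in> {1..q}" if "n \<in> {1..p + q}" "\<not> n \<le> p" for n
    using that by auto
  have "?\<theta> n \<in> {-1, 1} \<and> ?F n \<in> sets M \<and> emeasure M (?F n) > 0 \<and> bounded (?F n) \<and> diameter (?F n) < \<delta>"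
    if "n \<in> {1..p + q}" for n
    using that s G chain shifted[OF that] by (auto simp: incoming_chain_def)
  moreover have "strictly_incoming (?\<theta> n *\<^sub>R f) (l (?idx n)) \<and>
      (\<forall>m'\<in>{n<..p + q}. incoming (?\<theta> n *\<^sub>R f) (l (?idx m')))"
    if n: "n \<in> {1..p + q}" and f: "f \<in> ?F n" for n f
  proof (cases "n \<le> p")
    case True
    have "incoming (s *\<^sub>R f) (l (?idx m'))" if "m' \<in> {n<..p + q}" for m'
    proof (cases "m' \<le> p")
      case True
      then have "g m' \<in> P"
        using g \<open>m' \<in> {n<..p + q}\<close> \<open>n \<in> {1..p + q}\<close> by (auto dest: bij_betwE)
      then show ?thesis
        using True strict f \<open>n \<le> p\<close> by (simp add: strictly_incoming_imp_incoming)
    next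
      case False
      then have "m' - p \<in> {1..q}"
        using \<open>m' \<in> {n<..p + q}\<close> by auto
      then have "idx (m' - p) \<in> Z"
        using idx by (auto dest: bij_betwE)
      then show ?thesis
        using False weak f \<open>n \<le> p\<close> by simp
    qed
    moreover have "g n \<in> P"
      using g n True by (auto dest: bij_betwE)
    ultimately show ?thesis
      using True strict f by simp
  next
    case False
    have "\<forall>m'\<in>{n<..p + q}. \<not> m' \<le> p \<and> m' - p \<in> {n - p<..q}"
      using False by auto
    then show ?thesis
      using chain shifted[OF n False] False f by (auto simp: incoming_chain_def)
  qed
  moreover have "bij_betw ?idx {1..p + q} (P \<union> Z)"
    using g idx disj by (rule bij_betw_concat_intervals)
  ultimately show ?thesis
    by (auto simp: incoming_chain_def)
qed

lemma active_constraint_nonzero: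
  assumes "polytope l b m \<noteq> {}" and "i \<in> active_constraints l b m x"
  shows "\<exists>y. l i y \<noteq> 0"
proof -
  obtain p where "p \<in> polytope l b m"
    using assms(1) by blast
  then have "l i x < l i p"
    using assms(2) by (auto simp: active_constraints_def dest: polytope_less)
  then show ?thesis
    by (metis less_irrefl)
qed

lemma incoming_active_iff:
  assumes "\<forall>j\<in>{1..m}. linear (l j)" and "polytope l b m \<noteq> {}"
    and "i \<in> active_constraints l b m x"
  shows "incoming u (l i) \<longleftrightarrow> u \<noteq> 0 \<and> 0 \<le> l i u"
  using assms active_constraint_nonzero[OF assms(2,3)]
  by (auto simp: active_constraints_def incoming_iff_linear)

lemma strictly_incoming_active_iff:
  assumes "\<forall>j\<in>{1..m}. linear (l j)" and "polytope l b m \<noteq> {}"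
    and "i \<in> active_constraints l b m x"
  shows "strictly_incoming u (l i) \<longleftrightarrow> 0 < l i u"
  using assms active_constraint_nonzero[OF assms(2,3)]
  by (auto simp: active_constraints_def strictly_incoming_iff_linear)

lemma constant_sign_piece:
  assumes lin: "\<forall>j\<in>{1..m}. linear (l j)" and ne: "polytope l b m \<noteq> {}"
    and sets: "sets M = sets (restrict_space borel E)" and wi: "weakly_incoming M l b m"
    and \<delta>: "0 < \<delta>" and x: "x \<in> closure (polytope l b m)"
    and A: "active_constraints l b m x \<noteq> {}"
  shows "\<exists>\<theta>\<in>{-1, 1}. \<exists>P G. P \<subseteq> active_constraints l b m x \<and> P \<noteq> {} \<and>
    G \<in> sets M \<and> emeasure M G > 0 \<and> bounded G \<and> diameter G < \<delta> \<and>
    (\<forall>f\<in>G. \<forall>i\<in>active_constraints l b m x.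
       0 \<le> l i (\<theta> *\<^sub>R f) \<and> (0 < l i (\<theta> *\<^sub>R f) \<longleftrightarrow> i \<in> P))"
proof -
  let ?A = "active_constraints l b m x"
  have "x \<in> frontier (polytope l b m)"
    using lin x A by (rule frontier_polytope_if_active)
  then obtain \<epsilon> \<theta> F where \<epsilon>: "\<epsilon> > 0" and \<theta>: "\<theta> \<in> {-1::real, 1}" and F: "F \<in> sets M" "emeasure M F > 0"
    and dec: "\<forall>t\<in>{0<..\<epsilon>}. \<forall>e\<in>F. cnt l b m (x + (\<theta> * t) *\<^sub>R e) < cnt l b m x"
    using wi unfolding weakly_incoming_def by blast
  have signs: "(\<forall>i\<in>?A. 0 \<le> l i (\<theta> *\<^sub>R e)) \<and> (\<exists>i\<in>?A. 0 < l i (\<theta> *\<^sub>R e))" if "e \<in> F" for e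
  proof -
    have "l i ((\<theta> * \<epsilon>) *\<^sub>R e) = \<epsilon> * l i (\<theta> *\<^sub>R e)" if "i \<in> ?A" for i
      using that lin by (auto simp: active_constraints_def linear_cmul)
    moreover have "(\<forall>i\<in>?A. 0 \<le> l i ((\<theta> * \<epsilon>) *\<^sub>R e)) \<and> (\<exists>i\<in>?A. 0 < l i ((\<theta> * \<epsilon>) *\<^sub>R e))"
      using dec \<epsilon> \<open>e \<in> F\<close> by (intro active_signs_if_cnt_decreases[OF lin ne x]) auto
    ultimately show ?thesis
      using \<epsilon> by (simp add: zero_le_mult_iff zero_less_mult_iff)
  qed
  define pattern where "pattern P = {e. \<forall>i\<in>?A. (0 < l i (\<theta> *\<^sub>R e)) = (i \<in> P)}" for P
  have "l i \<in> borel_measurable borel" if "i \<in> ?A" for i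
    using that lin by (auto simp: active_constraints_def
        intro!: borel_measurable_continuous_onI continuous_on_linear_functional)
  then have borel: "pattern P \<in> sets borel" for P
    unfolding pattern_def by measurable
  have cover: "F \<subseteq> (\<Union>P\<in>Pow ?A. pattern P)"
  proof
    fix e
    have "{i\<in>?A. 0 < l i (\<theta> *\<^sub>R e)} \<in> Pow ?A"
      by blast
    moreover have "e \<in> pattern {i\<in>?A. 0 < l i (\<theta> *\<^sub>R e)}"
      by (simp add: pattern_def)
    ultimately show "e \<in> (\<Union>P\<in>Pow ?A. pattern P)"
      by (rule UN_I)
  qed
  have "finite (Pow ?A)"
    by simp
  from positive_measure_small_piece[OF sets F \<delta> this borel cover]
  obtain P G where P: "P \<subseteq> ?A" and G: "G \<in> sets M" "G \<subseteq> F \<inter> pattern P"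
      "emeasure M G > 0" "bounded G" "diameter G < \<delta>"
    by blast
  have "G \<noteq> {}"
    using G(3) by auto
  then have "P \<noteq> {}"
    using signs G(2) by (force simp: pattern_def)
  moreover have "\<forall>f\<in>G. \<forall>i\<in>?A. 0 \<le> l i (\<theta> *\<^sub>R f) \<and> (0 < l i (\<theta> *\<^sub>R f) \<longleftrightarrow> i \<in> P)"
    using signs G(2) by (auto simp: pattern_def)
  ultimately show ?thesis
    using \<theta> P G by blast
qed

lemma incoming_chain_exists:
  assumes lin: "\<forall>j\<in>{1..m}. linear (l j)" and ne: "polytope l b m \<noteq> {}"
    and sets: "sets M = sets (restrict_space borel E)" and wi: "weakly_incoming M l b m"
    and \<delta>: "0 < \<delta>" and x: "x \<in> closure (polytope l b m)"
  shows "\<exists>F \<theta> idx. incoming_chain M l \<delta> (active_constraints l b m x)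
    (card (active_constraints l b m x)) F \<theta> idx"
  using x
proof (induction "card (active_constraints l b m x)" arbitrary: x rule: less_induct)
  case less
  let ?A = "active_constraints l b m x"
  show ?case
  proof (cases "?A = {}")
    case True
    then show ?thesis
      using incoming_chain_empty by fastforce
  next
    case False
    then obtain \<theta> P G where \<theta>: "\<theta> \<in> {-1, 1}" and P: "P \<subseteq> ?A" "P \<noteq> {}"
      and G: "G \<in> sets M" "emeasure M G > 0" "bounded G" "diameter G < \<delta>"
      and signs: "\<forall>f\<in>G. \<forall>i\<in>?A. 0 \<le> l i (\<theta> *\<^sub>R f) \<and> (0 < l i (\<theta> *\<^sub>R f) \<longleftrightarrow> i \<in> P)"
      using constant_sign_piece[OF lin ne sets wi \<delta> less.prems] by blast
    have "G \<noteq> {}"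
      using G(2) by auto
    then obtain e0 where e0: "e0 \<in> G"
      by blast
    have deactivated: "{i\<in>?A. l i (\<theta> *\<^sub>R e0) = 0} = ?A - P"
      using signs e0 by force
    have nonneg: "\<forall>i\<in>?A. 0 \<le> l i (\<theta> *\<^sub>R e0)"
      using signs e0 by simp
    obtain t where x1: "x + t *\<^sub>R (\<theta> *\<^sub>R e0) \<in> closure (polytope l b m)"
      and act: "active_constraints l b m (x + t *\<^sub>R (\<theta> *\<^sub>R e0)) = ?A - P"
      using active_constraints_after_small_step[OF lin ne less.prems nonneg]
      unfolding deactivated by blast
    have "card (?A - P) < card ?A"
      using P by (intro psubset_card_mono) auto
    then obtain F \<Theta> idx where chain: "incoming_chain M l \<delta> (?A - P) (card (?A - P)) F \<Theta> idx"
      using less.hyps[OF _ x1] unfolding act by blast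
    have "finite P"
      using P(1) by (rule finite_subset) simp
    then obtain g where g: "bij_betw g {1..card P} P"
      using ex_bij_betw_nat_finite_1 by blast
    have strict: "strictly_incoming (\<theta> *\<^sub>R f) (l i)" if "f \<in> G" "i \<in> P" for f i
      using that P(1) signs strictly_incoming_active_iff[OF lin ne] by blast
    have weak: "incoming (\<theta> *\<^sub>R f) (l i)" if f: "f \<in> G" and i: "i \<in> ?A - P" for f i
    proof -
      obtain j where "j \<in> P"
        using P(2) by blast
      then have "\<theta> *\<^sub>R f \<noteq> 0"
        using f strict by (fastforce simp: strictly_incoming_def)
      then show ?thesis
        using i f signs incoming_active_iff[OF lin ne] by blast
    qed
    have "incoming_chain M l \<delta> (P \<union> (?A - P)) (card P + card (?A - P))
      (\<lambda>n. if n \<le> card P then G else F (n - card P)) (\<lambda>n. if n \<le> card P then \<theta> else \<Theta> (n - card P))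
      (\<lambda>n. if n \<le> card P then g n else idx (n - card P))"
      using chain g _ G \<theta> strict weak by (rule incoming_chain_prepend) auto
    moreover have "P \<union> (?A - P) = ?A" and "card P + card (?A - P) = card ?A"
      using P(1) by (auto simp: card_Diff_subset card_mono finite_subset)
    ultimately show ?thesis
      by metis
  qed
qed

lemma polytope_locally_active_halfspaces:
  assumes lin: "\<forall>j\<in>{1..m}. linear (l j)" and ne: "polytope l b m \<noteq> {}"
    and x: "x \<in> closure (polytope l b m)"
  shows "\<exists>r>0. polytope l b m \<inter> ball x r = (\<Inter>i\<in>active_constraints l b m x. Hplus (l i) (b i)) \<inter> ball x r"
proof -
  let ?A = "active_constraints l b m x"
  define U where "U = (\<Inter>j\<in>{1..m} - ?A. {y. b j < l j y})"
  have "open U"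
    unfolding U_def using lin
    by (intro open_INT ballI open_Collect_less continuous_on_const continuous_on_linear_functional) auto
  moreover have "x \<in> U"
    using x closure_polytope_le[OF lin ne x] by (force simp: U_def active_constraints_def)
  ultimately obtain r where "r > 0" and r: "ball x r \<subseteq> U"
    by (meson open_contains_ball)
  have "polytope l b m \<inter> ball x r = (\<Inter>i\<in>?A. Hplus (l i) (b i)) \<inter> ball x r"
    using r by (auto simp: polytope_def Hplus_def U_def active_constraints_def)
  with \<open>r > 0\<close> show ?thesis
    by blast
qed

theorem proposition5p4:
  fixes l :: "nat \<Rightarrow> 'a::euclidean_space \<Rightarrow> real" and b :: "nat \<Rightarrow> real" and m :: nat
    and E :: "'a set" and \<mu> :: "'a measure" and x0 :: 'a and k :: nat
  assumes dim: "DIM('a) \<ge> 2"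
    and lin: "\<forall>j\<in>{1..m}. linear (l j)"
    and ne: "polytope l b m \<noteq> {}"
    and bdd: "bounded (polytope l b m)"
    and sp: "space \<mu> = E"
    and sets: "sets \<mu> = sets (restrict_space borel E)"
    and prob: "prob_space \<mu>"
    and wi: "weakly_incoming \<mu> l b m"
    and x0: "x0 \<in> closure (polytope l b m)"
    and k: "cnt l b m x0 = enat k"
  shows "\<forall>\<delta>>0. \<exists>\<epsilon>>(0::real). \<exists>F :: nat \<Rightarrow> 'a set.
     (\<forall>n\<in>{1..k}. F n \<in> sets \<mu> \<and> emeasure \<mu> (F n) > 0 \<and> bounded (F n) \<and> diameter (F n) < \<delta>) \<and>
     (\<exists>r0>0. \<exists>I. I \<subseteq> {1..m} \<and> card I = k \<and>
        polytope l b m \<inter> ball x0 r0 = (\<Inter>i\<in>I. Hplus (l i) (b i)) \<inter> ball x0 r0 \<and>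
        (\<exists>\<theta> :: nat \<Rightarrow> real. \<exists>idx :: nat \<Rightarrow> nat.
           (\<forall>n\<in>{1..k}. \<theta> n \<in> {-1, 1}) \<and> bij_betw idx {1..k} I \<and>
           (\<forall>n\<in>{1..k}. \<forall>f\<in>F n.
              strictly_incoming (\<theta> n *\<^sub>R f) (l (idx n)) \<and>
              (\<forall>m'\<in>{n<..k}. incoming (\<theta> n *\<^sub>R f) (l (idx m'))))))"
proof (intro allI impI, goal_cases)
  case (1 \<delta>)
  let ?A = "active_constraints l b m x0"
  have card: "card ?A = k"
    using cnt_eq_card_active_constraints[OF x0] k by simp
  obtain F \<theta> idx where chain: "incoming_chain \<mu> l \<delta> ?A k F \<theta> idx"
    using incoming_chain_exists[OF lin ne sets wi 1 x0] card by blast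
  obtain r0 where "r0 > 0" and local: "polytope l b m \<inter> ball x0 r0 = (\<Inter>i\<in>?A. Hplus (l i) (b i)) \<inter> ball x0 r0"
    using polytope_locally_active_halfspaces[OF lin ne x0] by blast
  have "?A \<subseteq> {1..m}"
    by (auto simp: active_constraints_def)
  with chain card \<open>r0 > 0\<close> local show ?case
    unfolding incoming_chain_def
    by (intro exI[of _ r0] exI[of _ F] exI[of _ ?A] exI[of _ \<theta>] exI[of _ idx] conjI) simp_all
qed

end
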